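(* Let $G=M_{27}=\langle a,b\mid a^{9}=b^3=e,\ b^{-1}ab=a^{4}\rangle$ and let $\mathcal{A}$ be the $S$-ring over $G$ with basic sets $Z_0=\{e\}$, $Z_1=\{a^3b,\ a^6b^2\}$, $Z_2=\{a,\ a^3,\ a^6,\ a^8,\ a^4b^2,\ a^7b,\ a^8b,\ a^8b^2\}$, $Z_3=G\setminus(Z_0\cup Z_1\cup Z_2)$. Then $\mathcal{A}$ is not schurian.
   Context: For $X\subseteq G$, $\underline{X}=\sum_{x\in X}x\in\mathbb{Z}G$. A subring $\mathcal{A}$ of $\mathbb{Z}G$ is an $S$-ring over $G$ with basic sets forming a partition $\mathcal{S}(\mathcal{A})$ of $G$ if $\{e\}\in\mathcal{S}(\mathcal{A})$, $X\in\mathcal{S}(\mathcal{A})\Rightarrow X^{-1}\in\mathcal{S}(\mathcal{A})$, and $\mathcal{A}=\mathrm{Span}_{\mathbb{Z}}\{\underline{X}: X\in\mathcal{S}(\mathcal{A})\}$ (the span of $\underline{Z_0},\dots,\underline{Z_3}$ is indeed closed under multiplication). Let $G_{right}=\{x\mapsto xg: g\in G\}$. An $S$-ring $\mathcal{A}$ over $G$ is schurian if there is a permutation group $\Gamma$ with $G_{right}\leq\Gamma\leq\mathrm{Sym}(G)$ such that the basic sets of $\mathcal{A}$ are exactly the orbits on $G$ of the stabilizer $\Gamma_e$ of $e$ in $\Gamma$. *)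

theory Defs
  imports "HOL-Algebra.Bij"
begin

text \<open>The element a^i b^j (0 <= i < 9, 0 <= j < 3) is encoded as the pair (i, j).
  From b^-1 a b = a^4 one gets b a b^-1 = a^7, hence b^j a^k = a^(k*7^j) b^j and
  (a^i b^j)(a^k b^l) = a^(i + k*7^j) b^(j+l).\<close>

definition M27 :: "(nat \<times> nat) set" where
  "M27 = {0..<9} \<times> {0..<3}"

fun M27_mult :: "nat \<times> nat \<Rightarrow> nat \<times> nat \<Rightarrow> nat \<times> nat" where
  "M27_mult (i, j) (k, l) = ((i + k * 7 ^ j) mod 9, (j + l) mod 3)"

definition M27_one :: "nat \<times> nat" where
  "M27_one = (0, 0)"

definition schurian :: "'a set \<Rightarrow> ('a \<Rightarrow> 'a \<Rightarrow> 'a) \<Rightarrow> 'a \<Rightarrow> 'a set set \<Rightarrow> bool" where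
  "schurian G mul e S \<longleftrightarrow>
     (\<exists>\<Gamma>. subgroup \<Gamma> (BijGroup G) \<and>
          (\<forall>g\<in>G. (\<lambda>x\<in>G. mul x g) \<in> \<Gamma>) \<and>
          {{\<gamma> x | \<gamma>. \<gamma> \<in> \<Gamma> \<and> \<gamma> e = e} | x. x \<in> G} = S)"

definition Z0 :: "(nat \<times> nat) set" where "Z0 = {(0,0)}"
definition Z1 :: "(nat \<times> nat) set" where "Z1 = {(3,1), (6,2)}"
definition Z2 :: "(nat \<times> nat) set" where
  "Z2 = {(1,0), (3,0), (6,0), (8,0), (4,2), (7,1), (8,1), (8,2)}"
definition Z3 :: "(nat \<times> nat) set" where "Z3 = M27 - (Z0 \<union> Z1 \<union> Z2)"

end

theory Submission
  imports Defs
begin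

text \<open>Let Gamma witness schurity. Conjugating any gamma in Gamma by right translations gives
  an element of the stabilizer Gamma_e mapping v u^-1 to gamma(v) gamma(u)^-1, so every element
  of Gamma preserves the colouring (u, v) |-> (basic set containing v u^-1); moreover Gamma_e is
  transitive on each basic set. As a and a^3 both lie in Z2, some colour-preserving permutation
  fixes e and sends a to a^3. In M27 the colours relative to the points already placed force
  a^8b^2 |-> a^6, then ab |-> b^2 or ab |-> a^6b, then the image of a^2b, after which no point
  has the colours required of the image of a^3.\<close>

lemma subgroup_BijGroup_Bij:
  "subgroup \<Gamma> (BijGroup S) \<Longrightarrow> \<gamma> \<in> \<Gamma> \<Longrightarrow> \<gamma> \<in> Bij S"
  using subgroup.mem_carrier[of \<Gamma> "BijGroup S" \<gamma>] by (simp add: BijGroup_def)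

lemma subgroup_BijGroup_funcset:
  "subgroup \<Gamma> (BijGroup S) \<Longrightarrow> \<gamma> \<in> \<Gamma> \<Longrightarrow> \<gamma> \<in> S \<rightarrow> S"
  by (rule Bij_imp_funcset) (rule subgroup_BijGroup_Bij)

lemma subgroup_BijGroup_id:
  "subgroup \<Gamma> (BijGroup S) \<Longrightarrow> (\<lambda>x\<in>S. x) \<in> \<Gamma>"
  using subgroup.one_closed[of \<Gamma> "BijGroup S"] by (simp add: BijGroup_def)

lemma subgroup_BijGroup_compose:
  assumes "subgroup \<Gamma> (BijGroup S)" "f \<in> \<Gamma>" "g \<in> \<Gamma>"
  shows "compose S f g \<in> \<Gamma>"
  using subgroup.m_closed[OF assms] subgroup_BijGroup_Bij[OF assms(1)] assms(2,3)
  by (simp add: BijGroup_def)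

lemma subgroup_BijGroup_inv:
  assumes "subgroup \<Gamma> (BijGroup S)" "f \<in> \<Gamma>"
  shows "(\<lambda>x\<in>S. inv_into S f x) \<in> \<Gamma>"
  using subgroup.m_inv_closed[OF assms] inv_BijGroup[OF subgroup_BijGroup_Bij[OF assms]]
  by simp

lemma (in group) right_translations_conjugate_into_stabilizer:
  assumes \<Gamma>: "subgroup \<Gamma> (BijGroup (carrier G))"
    and right: "\<forall>g\<in>carrier G. (\<lambda>x\<in>carrier G. x \<otimes> g) \<in> \<Gamma>"
    and \<gamma>: "\<gamma> \<in> \<Gamma>" and u: "u \<in> carrier G" and v: "v \<in> carrier G"
  shows "\<exists>\<psi>\<in>\<Gamma>. \<psi> \<one> = \<one> \<and> \<psi> (v \<otimes> inv u) = \<gamma> v \<otimes> inv (\<gamma> u)"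
proof -
  have \<gamma>u: "\<gamma> u \<in> carrier G" and \<gamma>v: "\<gamma> v \<in> carrier G"
    using subgroup_BijGroup_funcset[OF \<Gamma> \<gamma>] u v by auto
  define \<psi> where "\<psi> = compose (carrier G) (\<lambda>x\<in>carrier G. x \<otimes> inv (\<gamma> u))
    (compose (carrier G) \<gamma> (\<lambda>x\<in>carrier G. x \<otimes> u))"
  have "\<psi> \<in> \<Gamma>"
    unfolding \<psi>_def using right \<gamma> u \<gamma>u
    by (intro subgroup_BijGroup_compose[OF \<Gamma>]) auto
  moreover have "\<psi> \<one> = \<one>"
    using u \<gamma>u by (simp add: \<psi>_def compose_def)
  moreover have "\<psi> (v \<otimes> inv u) = \<gamma> v \<otimes> inv (\<gamma> u)"
    using u v \<gamma>u \<gamma>v by (simp add: \<psi>_def compose_def m_assoc)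
  ultimately show ?thesis by blast
qed

lemma (in group) schurian_basic_set_transitive:
  assumes "schurian (carrier G) (\<otimes>) \<one> S" and "X \<in> S" "x \<in> X" "y \<in> X"
  obtains \<delta> where "\<delta> \<in> carrier G \<rightarrow> carrier G" "\<delta> \<one> = \<one>" "\<delta> x = y"
    and "\<And>u v. u \<in> carrier G \<Longrightarrow> v \<in> carrier G \<Longrightarrow>
           \<exists>Y\<in>S. v \<otimes> inv u \<in> Y \<and> \<delta> v \<otimes> inv (\<delta> u) \<in> Y"
proof -
  obtain \<Gamma> where \<Gamma>: "subgroup \<Gamma> (BijGroup (carrier G))"
    and right: "\<forall>g\<in>carrier G. (\<lambda>x\<in>carrier G. x \<otimes> g) \<in> \<Gamma>"
    and S: "S = {{\<gamma> w | \<gamma>. \<gamma> \<in> \<Gamma> \<and> \<gamma> \<one> = \<one>} | w. w \<in> carrier G}"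
    using assms(1) unfolding schurian_def by blast
  define orbit where "orbit w = {\<gamma> w | \<gamma>. \<gamma> \<in> \<Gamma> \<and> \<gamma> \<one> = \<one>}" for w
  have S_orbits: "S = orbit ` carrier G"
    unfolding S orbit_def by blast
  obtain w where w: "w \<in> carrier G" and X: "X = orbit w"
    using assms(2) S_orbits by blast
  obtain \<gamma>\<^sub>1 \<gamma>\<^sub>2 where \<gamma>\<^sub>1: "\<gamma>\<^sub>1 \<in> \<Gamma>" "\<gamma>\<^sub>1 \<one> = \<one>" "x = \<gamma>\<^sub>1 w"
    and \<gamma>\<^sub>2: "\<gamma>\<^sub>2 \<in> \<Gamma>" "\<gamma>\<^sub>2 \<one> = \<one>" "y = \<gamma>\<^sub>2 w"
    using assms(3,4) unfolding X orbit_def by blast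
  have inj: "inj_on \<gamma>\<^sub>1 (carrier G)"
    using subgroup_BijGroup_Bij[OF \<Gamma> \<gamma>\<^sub>1(1)] by (simp add: Bij_def bij_betw_def)
  define \<delta> where "\<delta> = compose (carrier G) \<gamma>\<^sub>2 (\<lambda>z\<in>carrier G. inv_into (carrier G) \<gamma>\<^sub>1 z)"
  have \<delta>\<Gamma>: "\<delta> \<in> \<Gamma>"
    unfolding \<delta>_def using \<gamma>\<^sub>1(1) \<gamma>\<^sub>2(1)
    by (intro subgroup_BijGroup_compose[OF \<Gamma>] subgroup_BijGroup_inv[OF \<Gamma>])
  show thesis
  proof
    show "\<delta> \<in> carrier G \<rightarrow> carrier G" by (rule subgroup_BijGroup_funcset[OF \<Gamma> \<delta>\<Gamma>])
    show "\<delta> \<one> = \<one>"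
      using inv_into_f_f[OF inj, of \<one>] \<gamma>\<^sub>1(2) \<gamma>\<^sub>2(2) by (simp add: \<delta>_def compose_def)
    have "\<gamma>\<^sub>1 w \<in> carrier G" using subgroup_BijGroup_funcset[OF \<Gamma> \<gamma>\<^sub>1(1)] w by auto
    then show "\<delta> x = y"
      using inv_into_f_f[OF inj w] \<gamma>\<^sub>1(3) \<gamma>\<^sub>2(3) by (simp add: \<delta>_def compose_def)
  next
    fix u v assume u: "u \<in> carrier G" and v: "v \<in> carrier G"
    obtain \<psi> where "\<psi> \<in> \<Gamma>" "\<psi> \<one> = \<one>" "\<psi> (v \<otimes> inv u) = \<delta> v \<otimes> inv (\<delta> u)"
      using right_translations_conjugate_into_stabilizer[OF \<Gamma> right \<delta>\<Gamma> u v] by blast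
    then have "\<delta> v \<otimes> inv (\<delta> u) \<in> orbit (v \<otimes> inv u)"
      unfolding orbit_def by (intro CollectI exI[of _ \<psi>]) simp
    moreover have "v \<otimes> inv u \<in> orbit (v \<otimes> inv u)"
      unfolding orbit_def using subgroup_BijGroup_id[OF \<Gamma>] u v
      by (intro CollectI exI[of _ "\<lambda>x\<in>carrier G. x"]) simp
    moreover have "orbit (v \<otimes> inv u) \<in> S"
      unfolding S_orbits using u v by simp
    ultimately show "\<exists>Y\<in>S. v \<otimes> inv u \<in> Y \<and> \<delta> v \<otimes> inv (\<delta> u) \<in> Y" by blast
  qed
qed

lemma power_mod_period:
  fixes a :: nat
  assumes "a ^ k mod m = 1"
  shows "a ^ (n mod k) mod m = a ^ n mod m"
proof -
  have "a ^ n = a ^ (k * (n div k) + n mod k)"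
    by simp
  also have "\<dots> = (a ^ k) ^ (n div k) * a ^ (n mod k)"
    by (simp only: power_add power_mult)
  finally have "a ^ n mod m = ((a ^ k mod m) ^ (n div k) mod m * a ^ (n mod k)) mod m"
    by (metis mod_mult_left_eq power_mod)
  then show ?thesis
    using assms by simp
qed

lemma M27_mult_assoc: "M27_mult (M27_mult x y) z = M27_mult x (M27_mult y z)"
proof -
  obtain i j k l m n where xyz: "x = (i, j)" "y = (k, l)" "z = (m, n)" by (metis surj_pair)
  have "7 ^ ((j + l) mod 3) mod 9 = (7 ^ (j + l) mod 9 :: nat)"
    by (rule power_mod_period) simp
  then have "m * 7 ^ ((j + l) mod 3) mod 9 = m * 7 ^ (j + l) mod (9::nat)"
    by (metis mod_mult_right_eq)
  then have "((i + k * 7 ^ j) mod 9 + m * 7 ^ ((j + l) mod 3)) mod 9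
      = (i + k * 7 ^ j + m * 7 ^ (j + l)) mod 9"
    by (metis mod_add_left_eq mod_add_right_eq)
  also have "\<dots> = (i + (k + m * 7 ^ l) * 7 ^ j) mod 9"
    by (simp add: algebra_simps power_add)
  also have "\<dots> = (i + (k + m * 7 ^ l) mod 9 * 7 ^ j) mod 9"
    by (metis mod_add_right_eq mod_mult_left_eq)
  finally show ?thesis
    using xyz by (simp add: mod_add_left_eq mod_add_right_eq add.assoc)
qed

abbreviation M27_group :: "(nat \<times> nat) monoid" where
  "M27_group \<equiv> \<lparr>carrier = M27, mult = M27_mult, one = M27_one\<rparr>"

definition M27_elements :: "(nat \<times> nat) list" where
  "M27_elements = List.product [0, 1, 2, 3, 4, 5, 6, 7, 8] [0, 1, 2]"

lemma set_M27_elements: "set M27_elements = M27"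
proof -
  have "{0..<9} = {0, 1, 2, 3, 4, 5, 6, 7, 8 :: nat}" "{0..<3} = {0, 1, 2 :: nat}"
    by auto
  then show ?thesis
    by (simp add: M27_elements_def M27_def)
qed

text \<open>(a^i b^j)^-1 = a^(-i * 4^j) b^(-j), because b^j a b^-j = a^(7^j) and 4 * 7 = 1 mod 9.\<close>

fun M27_inv :: "nat \<times> nat \<Rightarrow> nat \<times> nat" where
  "M27_inv (i, j) = ((9 - i) * 4 ^ j mod 9, (3 - j) mod 3)"

lemma M27_mult_closed: "x \<in> M27 \<Longrightarrow> y \<in> M27 \<Longrightarrow> M27_mult x y \<in> M27"
  by (cases x; cases y) (simp add: M27_def)

lemma M27_inv_closed: "x \<in> M27 \<Longrightarrow> M27_inv x \<in> M27"
  by (cases x) (simp add: M27_def)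

lemma M27_inv_mult: "x \<in> M27 \<Longrightarrow> M27_mult (M27_inv x) x = M27_one"
proof -
  have "\<forall>x\<in>set M27_elements. M27_mult (M27_inv x) x = M27_one"
    by (simp add: M27_elements_def M27_one_def)
  then show "x \<in> M27 \<Longrightarrow> ?thesis" by (simp add: set_M27_elements)
qed

lemma group_M27: "group M27_group"
proof (rule groupI)
  fix x :: "nat \<times> nat"
  assume "x \<in> carrier M27_group"
  then show "\<one>\<^bsub>M27_group\<^esub> \<otimes>\<^bsub>M27_group\<^esub> x = x"
    by (cases x) (simp add: M27_def M27_one_def)
  show "\<exists>y\<in>carrier M27_group. y \<otimes>\<^bsub>M27_group\<^esub> x = \<one>\<^bsub>M27_group\<^esub>"
    using \<open>x \<in> carrier M27_group\<close>
    by (intro bexI[of _ "M27_inv x"]) (simp_all add: M27_inv_closed M27_inv_mult del: M27_inv.simps)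
qed (simp_all add: M27_mult_closed M27_mult_assoc, simp add: M27_one_def M27_def)

lemma M27_m_inv: "x \<in> M27 \<Longrightarrow> inv\<^bsub>M27_group\<^esub> x = M27_inv x"
  by (rule group.inv_equality[OF group_M27])
    (simp_all add: M27_inv_mult M27_inv_closed del: M27_inv.simps)

definition basic_set_index :: "nat \<times> nat \<Rightarrow> nat" where
  "basic_set_index z = (if z \<in> Z0 then 0 else if z \<in> Z1 then 1 else if z \<in> Z2 then 2 else 3)"

definition M27_colour :: "nat \<times> nat \<Rightarrow> nat \<times> nat \<Rightarrow> nat" where
  "M27_colour x y = basic_set_index (M27_mult y (M27_inv x))"

lemma basic_set_index_eq:
  assumes "Y \<in> {Z0, Z1, Z2, Z3}" "z \<in> Y" "z' \<in> Y"
  shows "basic_set_index z = basic_set_index z'"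
proof -
  have "basic_set_index z = 0" if "z \<in> Z0" for z
    using that by (simp add: basic_set_index_def)
  moreover have "basic_set_index z = 1" if "z \<in> Z1" for z
    using that by (auto simp: basic_set_index_def Z0_def Z1_def)
  moreover have "basic_set_index z = 2" if "z \<in> Z2" for z
    using that by (auto simp: basic_set_index_def Z0_def Z1_def Z2_def)
  moreover have "basic_set_index z = 3" if "z \<in> Z3" for z
    using that by (simp add: basic_set_index_def Z3_def)
  ultimately show ?thesis
    using assms by (metis empty_iff insert_iff)
qed

definition consistent_images :: "('a \<Rightarrow> 'a \<Rightarrow> 'c) \<Rightarrow> 'a list \<Rightarrow> ('a \<times> 'a) list \<Rightarrow> 'a \<Rightarrow> 'a list" where
  "consistent_images c xs ps z = [w \<leftarrow> xs. \<forall>(x, y) \<in> set ps. c y w = c x z \<and> c w y = c z x]"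

lemma colour_preserving_image_mem_consistent_images:
  assumes "\<forall>x\<in>set xs. \<forall>y\<in>set xs. c (\<delta> x) (\<delta> y) = c x y"
    and "z \<in> set xs" "\<delta> z \<in> set xs" "\<forall>(x, y)\<in>set ps. x \<in> set xs \<and> \<delta> x = y"
  shows "\<delta> z \<in> set (consistent_images c xs ps z)"
  using assms by (fastforce simp: consistent_images_def)

lemma M27_no_colour_automorphism_a_to_a3:
  assumes maps: "\<delta> \<in> M27 \<rightarrow> M27" and e: "\<delta> (0, 0) = (0, 0)" and a: "\<delta> (1, 0) = (3, 0)"
    and colour: "\<forall>x\<in>M27. \<forall>y\<in>M27. M27_colour (\<delta> x) (\<delta> y) = M27_colour x y"
  shows False
proof -
  have forced: "\<delta> z \<in> set (consistent_images M27_colour M27_elements ps z)"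
    if "z \<in> M27" "\<forall>(x, y)\<in>set ps. x \<in> M27 \<and> \<delta> x = y" for z ps
    using colour_preserving_image_mem_consistent_images[of M27_elements M27_colour \<delta> z ps]
      colour that maps by (auto simp: set_M27_elements)
  note compute = M27_def consistent_images_def M27_elements_def M27_colour_def
    basic_set_index_def Z0_def Z1_def Z2_def
  have a82: "\<delta> (8, 2) = (6, 0)"
    using forced[of "(8, 2)" "[((0, 0), (0, 0)), ((1, 0), (3, 0))]"] e a by (simp add: compute)
  have "\<delta> (1, 1) = (0, 2) \<or> \<delta> (1, 1) = (6, 1)"
    using forced[of "(1, 1)" "[((0, 0), (0, 0)), ((1, 0), (3, 0)), ((8, 2), (6, 0))]"] e a a82
    by (simp add: compute)
  then show False
  proof
    assume a11: "\<delta> (1, 1) = (0, 2)"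
    then have "\<delta> (2, 1) = (3, 2)"
      using forced[of "(2, 1)" "[((8, 2), (6, 0)), ((1, 1), (0, 2))]"] a82 by (simp add: compute)
    then show False
      using forced[of "(3, 0)" "[((0, 0), (0, 0)), ((1, 1), (0, 2)), ((2, 1), (3, 2))]"] e a11
      by (simp add: compute)
  next
    assume a11: "\<delta> (1, 1) = (6, 1)"
    then have "\<delta> (2, 1) = (0, 1)"
      using forced[of "(2, 1)" "[((8, 2), (6, 0)), ((1, 1), (6, 1))]"] a82 by (simp add: compute)
    then show False
      using forced[of "(3, 0)" "[((0, 0), (0, 0)), ((1, 1), (6, 1)), ((2, 1), (0, 1))]"] e a11
      by (simp add: compute)
  qed
qed

lemma schurian_M27_colour_automorphism:
  assumes "schurian M27 M27_mult M27_one {Z0, Z1, Z2, Z3}"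
  obtains \<delta> where "\<delta> \<in> M27 \<rightarrow> M27" "\<delta> (0, 0) = (0, 0)" "\<delta> (1, 0) = (3, 0)"
    and "\<forall>x\<in>M27. \<forall>y\<in>M27. M27_colour (\<delta> x) (\<delta> y) = M27_colour x y"
proof -
  have schurian: "schurian (carrier M27_group) (mult M27_group) (one M27_group) {Z0, Z1, Z2, Z3}"
    using assms by simp
  have Z2: "Z2 \<in> {Z0, Z1, Z2, Z3}" "(1, 0) \<in> Z2" "(3, 0) \<in> Z2"
    by (simp_all add: Z2_def)
  obtain \<delta> where maps: "\<delta> \<in> carrier M27_group \<rightarrow> carrier M27_group"
    and e: "\<delta> \<one>\<^bsub>M27_group\<^esub> = \<one>\<^bsub>M27_group\<^esub>" and a: "\<delta> (1, 0) = (3, 0)"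
    and same_basic_set: "\<And>u v. u \<in> carrier M27_group \<Longrightarrow> v \<in> carrier M27_group \<Longrightarrow>
      \<exists>Y\<in>{Z0, Z1, Z2, Z3}. v \<otimes>\<^bsub>M27_group\<^esub> inv\<^bsub>M27_group\<^esub> u \<in> Y \<and>
        \<delta> v \<otimes>\<^bsub>M27_group\<^esub> inv\<^bsub>M27_group\<^esub> (\<delta> u) \<in> Y"
    by (rule group.schurian_basic_set_transitive[OF group_M27 schurian Z2]) (rule that)
  have "M27_colour (\<delta> x) (\<delta> y) = M27_colour x y" if xy: "x \<in> M27" "y \<in> M27" for x y
  proof -
    have \<delta>x: "\<delta> x \<in> M27"
      using maps xy by auto
    obtain Y where "Y \<in> {Z0, Z1, Z2, Z3}"
      "M27_mult y (inv\<^bsub>M27_group\<^esub> x) \<in> Y" "M27_mult (\<delta> y) (inv\<^bsub>M27_group\<^esub> (\<delta> x)) \<in> Y"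
      using same_basic_set[of x y] xy by auto
    then show ?thesis
      unfolding M27_colour_def M27_m_inv[OF xy(1)] M27_m_inv[OF \<delta>x]
      by (rule basic_set_index_eq[symmetric])
  qed
  then show thesis
    using that maps e a by (simp add: M27_one_def)
qed

theorem proposition3p1:
  shows "\<not> schurian M27 M27_mult M27_one {Z0, Z1, Z2, Z3}"
proof
  assume "schurian M27 M27_mult M27_one {Z0, Z1, Z2, Z3}"
  then obtain \<delta> where "\<delta> \<in> M27 \<rightarrow> M27" "\<delta> (0, 0) = (0, 0)" "\<delta> (1, 0) = (3, 0)"
    "\<forall>x\<in>M27. \<forall>y\<in>M27. M27_colour (\<delta> x) (\<delta> y) = M27_colour x y"
    by (rule schurian_M27_colour_automorphism)
  then show False
    by (rule M27_no_colour_automorphism_a_to_a3)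
qed

end
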